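(* Let $\mathfrak{I}=(\mathcal{I},[\mathcal{F}_1,\dots,\mathcal{F}_k],\mathcal{X},\pi,\sim,\mathcal{S})$ be a domain constrained interpretation and $C_1,C_2,D_1,D_2$ natural concepts that are fully specified by their features in $\mathfrak{I}$, i.e. $N^{\mathcal{I}}=\{d\in\Delta^{\mathcal{I}}\mid\varphi(N)\subseteq\pi(d)\}$ for $N\in\{C_1,C_2,D_1,D_2\}$. If $\mathfrak{I}$ satisfies the analogy assertion $C_1:D_1::C_2:D_2$ and the concept inclusion $C_1\sqsubseteq C_2$, then $\mathfrak{I}$ also satisfies $D_1\sqsubseteq D_2$.
   Context: Concepts: $C,D::=\top\mid\bot\mid A\mid C\sqcap D\mid \exists r.C\mid N$; natural concepts: $N,N'::=A'\mid N\sqcap N'\mid N\bowtie N'\mid \exists r'.N$, with $A$ a concept name, $A'$ a natural concept name, $r$ a role name, $r'$ an intra-domain role name. A domain constrained interpretation is $\mathfrak{I}=(\mathcal{I},[\mathcal{F}_1,\dots,\mathcal{F}_k],\mathcal{X},\pi,\sim,\mathcal{S})$ where $\mathcal{I}=(\Delta^{\mathcal{I}},\cdot^{\mathcal{I}})$ is a classical DL interpretation, $[\mathcal{F}_1,\dots,\mathcal{F}_k]$ partitions a nonempty finite set $\mathcal{F}$, $\mathcal{X}\subseteq2^{\mathcal{F}}$ with $\mathcal{F}\in\mathcal{X}$, $\pi:\Delta^{\mathcal{I}}\to2^{\mathcal{F}}$, $\sim$ an equivalence relation on $\{1,\dots,k\}$, $\mathcal{S}=\{\sigma_{(s,t)}\mid(s,t)\in\sim\}$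 with $\sigma_{(s,t)}:\mathcal{F}_s\to\mathcal{F}_t$ bijections. With $\mathcal{C}=\{G\subseteq\mathcal{F}\mid X\not\subseteq G\ \forall X\in\mathcal{X}\}$ and $\mathcal{C}^i=\{G\in\mathcal{C}\mid G\subseteq\mathcal{F}_i\}$ it is required: (1) $X\not\subseteq\pi(d)$ for all $d$, $X\in\mathcal{X}$; (2) each $G\in\mathcal{C}$ is $\pi(d)$ for some $d$; (3) $\sigma_{(s,t)}^{-1}=\sigma_{(t,s)}$, $\sigma_{(t,u)}\circ\sigma_{(s,t)}=\sigma_{(s,u)}$; (4) $\sigma_{(i,j)}(G)\in\mathcal{C}$ for $G\in\mathcal{C}^i$, $(i,j)\in\sim$; (5) $\{f,g\}\in\mathcal{X}$ whenever $f\in\mathcal{F}_i$, $g\in\mathcal{F}_j$, $(i,j)\in\sim$, $i\neq j$. $\varphi(C)=\bigcap\{\pi(d)\mid d\in C^{\mathcal{I}}\}$ ($=\mathcal{F}$ if $C^{\mathcal{I}}=\emptyset$). Concepts are interpreted as usual, with $(N\bowtie N')^{\mathcal{I}}=\{d\mid\varphi(N)\cap\varphi(N')\subseteq\pi(d)\}$, and every intra-domain role name $r$ interpreted as an intra-domain relation: there is $\kappa_r:2^{\mathcal{F}}\to2^{\mathcal{F}}$ with $(\exists r.C)^{\mathcal{I}}=\{d\mid\kappa_r(\varphi(C))\subseteq\pi(d)\}$ for all $C$, $\kappa_r(G)=\bigcup_i\kappa_r(G\cap\mathcal{F}_i)$ for $G\in\mathcal{C}$, $\kappa_r(G)\subseteq\mathcal{F}_i$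 for $G\in\mathcal{C}^i$, $\kappa_r(\sigma_{(i,j)}(G))=\sigma_{(i,j)}(\kappa_r(G))$ for $(i,j)\in\sim$, $G\in\mathcal{C}^i$, and $\kappa_r(G)\neq\emptyset$ for $G\in\mathcal{C}^i\setminus\{\emptyset\}$. $\delta(C)=\{i\mid\mathcal{F}_i\cap\varphi(C)\neq\emptyset\}$. For $U=\{(s_1,t_1),\dots,(s_l,t_l)\}\subseteq\sim$ with pairwise distinct $s_i$ and pairwise distinct $t_i$, the domain translation $\sigma_U:\mathcal{F}\to\mathcal{F}$ maps $f\in\mathcal{F}_{s_i}$ to $\sigma_{(s_i,t_i)}(f)$ and fixes all other features; $\mathrm{src}(U)=\{s_i\}$, $\mathrm{tgt}(U)=\{t_i\}$. $\mu(C,D)$ is the set of $\sigma_U$ with $\varphi(D)=\sigma_U(\varphi(C))$, $\mathrm{src}(U)\subseteq\delta(C)$, $\mathrm{tgt}(U)\cap(\delta(C)\setminus\mathrm{src}(U))=\emptyset$. An analogy assertion $C_1:C_2::D_1:D_2$ is satisfied in $\mathfrak{I}$ iff $\mu(C_1,C_2)\cap\mu(D_1,D_2)\neq\emptyset$; a concept inclusion $C\sqsubseteq D$ is satisfied iff $C^{\mathcal{I}}\subseteq D^{\mathcal{I}}$. *)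

theory Defs
  imports Main
begin

datatype ('c, 'r) concept =
    Top
  | Bot
  | CN 'c
  | CAnd "('c, 'r) concept" "('c, 'r) concept"
  | CEx 'r "('c, 'r) concept"
  | Bowtie "('c, 'r) concept" "('c, 'r) concept"

inductive natural :: "'c set \<Rightarrow> 'r set \<Rightarrow> ('c, 'r) concept \<Rightarrow> bool"
  for NC :: "'c set" and IR :: "'r set" where
  nat_name: "A \<in> NC \<Longrightarrow> natural NC IR (CN A)"
| nat_and: "natural NC IR N \<Longrightarrow> natural NC IR N' \<Longrightarrow> natural NC IR (CAnd N N')"
| nat_bowtie: "natural NC IR N \<Longrightarrow> natural NC IR N' \<Longrightarrow> natural NC IR (Bowtie N N')"
| nat_ex: "r \<in> IR \<Longrightarrow> natural NC IR N \<Longrightarrow> natural NC IR (CEx r N)"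

text \<open>The partition [F_1,...,F_k] is given by k and the blocks Fs 1, ..., Fs k;
  sig s t is the bijection sigma_(s,t).\<close>

record ('d, 'c, 'r, 'f) dci =
  Delta :: "'d set"
  cint :: "'c \<Rightarrow> 'd set"
  rint :: "'r \<Rightarrow> ('d \<times> 'd) set"
  kk :: nat
  Fs :: "nat \<Rightarrow> 'f set"
  XX :: "'f set set"
  pi :: "'d \<Rightarrow> 'f set"
  sim :: "(nat \<times> nat) set"
  sig :: "nat \<Rightarrow> nat \<Rightarrow> 'f \<Rightarrow> 'f"

definition feats :: "('d, 'c, 'r, 'f) dci \<Rightarrow> 'f set" where
  "feats I = (\<Union>i\<in>{1..kk I}. Fs I i)"

definition cons :: "('d, 'c, 'r, 'f) dci \<Rightarrow> 'f set set" where
  "cons I = {G. G \<subseteq> feats I \<and> (\<forall>X\<in>XX I. \<not> X \<subseteq> G)}"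

definition cons_i :: "('d, 'c, 'r, 'f) dci \<Rightarrow> nat \<Rightarrow> 'f set set" where
  "cons_i I i = {G \<in> cons I. G \<subseteq> Fs I i}"

definition phiS :: "('d, 'c, 'r, 'f) dci \<Rightarrow> 'd set \<Rightarrow> 'f set" where
  "phiS I S = (if S = {} then feats I else (\<Inter>d\<in>S. pi I d))"

fun ext :: "('d, 'c, 'r, 'f) dci \<Rightarrow> ('c, 'r) concept \<Rightarrow> 'd set" where
  "ext I Top = Delta I"
| "ext I Bot = {}"
| "ext I (CN A) = cint I A"
| "ext I (CAnd C D) = ext I C \<inter> ext I D"
| "ext I (CEx r C) = {d \<in> Delta I. \<exists>e. (d, e) \<in> rint I r \<and> e \<in> ext I C}"
| "ext I (Bowtie N N') =
     {d \<in> Delta I. phiS I (ext I N) \<inter> phiS I (ext I N') \<subseteq> pi I d}"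

definition phi :: "('d, 'c, 'r, 'f) dci \<Rightarrow> ('c, 'r) concept \<Rightarrow> 'f set" where
  "phi I C = phiS I (ext I C)"

definition intra_domain :: "('d, 'c, 'r, 'f) dci \<Rightarrow> 'r \<Rightarrow> bool" where
  "intra_domain I r \<longleftrightarrow> (\<exists>\<kappa> :: 'f set \<Rightarrow> 'f set.
      (\<forall>C :: ('c, 'r) concept. ext I (CEx r C) = {d \<in> Delta I. \<kappa> (phi I C) \<subseteq> pi I d})
    \<and> (\<forall>G \<in> cons I. \<kappa> G = (\<Union>i\<in>{1..kk I}. \<kappa> (G \<inter> Fs I i)))
    \<and> (\<forall>i\<in>{1..kk I}. \<forall>G \<in> cons_i I i. \<kappa> G \<subseteq> Fs I i)
    \<and> (\<forall>i j G. (i, j) \<in> sim I \<longrightarrow> G \<in> cons_i I i \<longrightarrow>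
                 \<kappa> (sig I i j ` G) = sig I i j ` \<kappa> G)
    \<and> (\<forall>i\<in>{1..kk I}. \<forall>G \<in> cons_i I i. G \<noteq> {} \<longrightarrow> \<kappa> G \<noteq> {}))"

definition is_dci :: "'r set \<Rightarrow> ('d, 'c, 'r, 'f) dci \<Rightarrow> bool" where
  "is_dci IR I \<longleftrightarrow>
     \<comment> \<open>classical interpretation\<close>
     Delta I \<noteq> {}
   \<and> (\<forall>A. cint I A \<subseteq> Delta I)
   \<and> (\<forall>r. rint I r \<subseteq> Delta I \<times> Delta I)
     \<comment> \<open>partition of a nonempty finite feature set\<close>
   \<and> finite (feats I) \<and> feats I \<noteq> {}
   \<and> (\<forall>i\<in>{1..kk I}. Fs I i \<noteq> {})
   \<and> (\<forall>i\<in>{1..kk I}. \<forall>j\<in>{1..kk I}. i \<noteq> j \<longrightarrow> Fs I i \<inter> Fs I j = {})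
     \<comment> \<open>constraints\<close>
   \<and> XX I \<subseteq> Pow (feats I) \<and> feats I \<in> XX I
   \<and> (\<forall>d\<in>Delta I. pi I d \<subseteq> feats I)
   \<and> equiv {1..kk I} (sim I)
   \<and> (\<forall>(s, t)\<in>sim I. bij_betw (sig I s t) (Fs I s) (Fs I t))
     \<comment> \<open>(1)\<close>
   \<and> (\<forall>d\<in>Delta I. \<forall>X\<in>XX I. \<not> X \<subseteq> pi I d)
     \<comment> \<open>(2)\<close>
   \<and> (\<forall>G\<in>cons I. \<exists>d\<in>Delta I. pi I d = G)
     \<comment> \<open>(3)\<close>
   \<and> (\<forall>(s, t)\<in>sim I. \<forall>f\<in>Fs I s. sig I t s (sig I s t f) = f)
   \<and> (\<forall>s t u. (s, t) \<in> sim I \<longrightarrow> (t, u) \<in> sim I \<longrightarrow>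
        (\<forall>f\<in>Fs I s. sig I t u (sig I s t f) = sig I s u f))
     \<comment> \<open>(4)\<close>
   \<and> (\<forall>i j G. (i, j) \<in> sim I \<longrightarrow> G \<in> cons_i I i \<longrightarrow> sig I i j ` G \<in> cons I)
     \<comment> \<open>(5)\<close>
   \<and> (\<forall>i j f g. (i, j) \<in> sim I \<longrightarrow> i \<noteq> j \<longrightarrow> f \<in> Fs I i \<longrightarrow> g \<in> Fs I j
        \<longrightarrow> {f, g} \<in> XX I)
     \<comment> \<open>intra-domain role names\<close>
   \<and> (\<forall>r\<in>IR. intra_domain I r)"

definition delta :: "('d, 'c, 'r, 'f) dci \<Rightarrow> ('c, 'r) concept \<Rightarrow> nat set" where
  "delta I C = {i\<in>{1..kk I}. Fs I i \<inter> phi I C \<noteq> {}}"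

definition adm_U :: "('d, 'c, 'r, 'f) dci \<Rightarrow> (nat \<times> nat) set \<Rightarrow> bool" where
  "adm_U I U \<longleftrightarrow> U \<subseteq> sim I \<and> inj_on fst U \<and> inj_on snd U"

definition sigmaU :: "('d, 'c, 'r, 'f) dci \<Rightarrow> (nat \<times> nat) set \<Rightarrow> 'f \<Rightarrow> 'f" where
  "sigmaU I U f =
     (if \<exists>p\<in>U. f \<in> Fs I (fst p)
      then (let p = (SOME p. p \<in> U \<and> f \<in> Fs I (fst p)) in sig I (fst p) (snd p) f)
      else f)"

definition src :: "(nat \<times> nat) set \<Rightarrow> nat set" where "src U = fst ` U"
definition tgt :: "(nat \<times> nat) set \<Rightarrow> nat set" where "tgt U = snd ` U"

definition mu :: "('d, 'c, 'r, 'f) dci \<Rightarrow> ('c, 'r) concept \<Rightarrow> ('c, 'r) concept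
                   \<Rightarrow> ('f \<Rightarrow> 'f) set" where
  "mu I C D = {sigmaU I U | U. adm_U I U
       \<and> phi I D = sigmaU I U ` phi I C
       \<and> src U \<subseteq> delta I C
       \<and> tgt U \<inter> (delta I C - src U) = {}}"

text \<open>Analogy assertion C1 : C2 :: D1 : D2.\<close>
definition sat_analogy :: "('d, 'c, 'r, 'f) dci \<Rightarrow> ('c, 'r) concept \<Rightarrow> ('c, 'r) concept
     \<Rightarrow> ('c, 'r) concept \<Rightarrow> ('c, 'r) concept \<Rightarrow> bool" where
  "sat_analogy I C1 C2 D1 D2 \<longleftrightarrow> mu I C1 C2 \<inter> mu I D1 D2 \<noteq> {}"

definition sat_incl :: "('d, 'c, 'r, 'f) dci \<Rightarrow> ('c, 'r) concept \<Rightarrow> ('c, 'r) concept \<Rightarrow> bool" where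
  "sat_incl I C D \<longleftrightarrow> ext I C \<subseteq> ext I D"

definition fully_specified :: "('d, 'c, 'r, 'f) dci \<Rightarrow> ('c, 'r) concept \<Rightarrow> bool" where
  "fully_specified I N \<longleftrightarrow> ext I N = {d \<in> Delta I. phi I N \<subseteq> pi I d}"

end

theory Submission
  imports Defs
begin

text \<open>For fully specified concepts, C \<sqsubseteq> D holds exactly when \<phi>(D) \<subseteq> \<phi>(C).
  A domain translation witnessing the analogy maps \<phi>(C1) onto \<phi>(D1) and
  \<phi>(C2) onto \<phi>(D2); since taking images preserves inclusion, \<phi>(C2) \<subseteq> \<phi>(C1)
  transfers to \<phi>(D2) \<subseteq> \<phi>(D1).\<close>

lemma pi_subset_feats:
  assumes "is_dci IR I" and "d \<in> Delta I"
  shows "pi I d \<subseteq> feats I"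
  using assms unfolding is_dci_def by (elim conjE) blast

lemma phiS_antimono:
  assumes "S \<subseteq> T" and "\<forall>d\<in>T. pi I d \<subseteq> feats I"
  shows "phiS I T \<subseteq> phiS I S"
proof (cases "S = {}")
  case True
  then show ?thesis
    using assms(2) unfolding phiS_def by auto
next
  case False
  with assms(1) show ?thesis
    unfolding phiS_def by auto
qed

lemma sat_incl_iff_phi_subset:
  assumes feats: "\<forall>d\<in>Delta I. pi I d \<subseteq> feats I"
    and C: "fully_specified I C" and D: "fully_specified I D"
  shows "sat_incl I C D \<longleftrightarrow> phi I D \<subseteq> phi I C"
proof
  assume "sat_incl I C D"
  moreover have "\<forall>d\<in>ext I D. pi I d \<subseteq> feats I"
    using D feats unfolding fully_specified_def by blast
  ultimately show "phi I D \<subseteq> phi I C"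
    unfolding sat_incl_def phi_def by (rule phiS_antimono)
next
  assume "phi I D \<subseteq> phi I C"
  then show "sat_incl I C D"
    using C D unfolding sat_incl_def fully_specified_def by blast
qed

lemma phi_eq_image_if_mem_mu:
  assumes "\<sigma> \<in> mu I C D"
  shows "phi I D = \<sigma> ` phi I C"
  using assms unfolding mu_def by blast

theorem proposition10:
  fixes I :: "('d, 'c, 'r, 'f) dci"
    and NC :: "'c set" and IR :: "'r set"
    and C1 C2 D1 D2 :: "('c, 'r) concept"
  assumes "is_dci IR I"
    and "natural NC IR C1" and "natural NC IR C2"
    and "natural NC IR D1" and "natural NC IR D2"
    and "fully_specified I C1" and "fully_specified I C2"
    and "fully_specified I D1" and "fully_specified I D2"
    and "sat_analogy I C1 D1 C2 D2"
    and "sat_incl I C1 C2"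
  shows "sat_incl I D1 D2"
proof -
  have feats: "\<forall>d\<in>Delta I. pi I d \<subseteq> feats I"
    using pi_subset_feats[OF assms(1)] by blast
  from assms(10) obtain \<sigma> where "\<sigma> \<in> mu I C1 D1" and "\<sigma> \<in> mu I C2 D2"
    unfolding sat_analogy_def by blast
  then have D1: "phi I D1 = \<sigma> ` phi I C1" and D2: "phi I D2 = \<sigma> ` phi I C2"
    by (simp_all add: phi_eq_image_if_mem_mu)
  have "phi I C2 \<subseteq> phi I C1"
    using sat_incl_iff_phi_subset[OF feats assms(6,7)] assms(11) by blast
  then have "phi I D2 \<subseteq> phi I D1"
    unfolding D1 D2 by (rule image_mono)
  then show ?thesis
    using sat_incl_iff_phi_subset[OF feats assms(8,9)] by blast
qed

end
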